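(* Let $M$ be a finite MDP with fairness setup and $p_{\mathrm{maj}},p_{\mathrm{min}}>0$. Let $R_{\max}>0$ satisfy $|R_{s,a}|\le R_{\max}$ and $|\rho_{s,a}|\le R_{\max}$ for all $s,a$. Let $\epsilon>0$, $\sigma\in(0,1/2]$, and let $T$ be a positive integer with $\dfrac{\gamma^TR_{\max}}{1-\gamma}\le\dfrac{\sigma^2\epsilon}{4}$. Let $\pi^*$ be a maximizer of $R^{(\pi)}$ over $\pi\in\Pi_{\mathrm{DP},(1-\sigma)^2\epsilon}$ and let $\tilde\pi^*$ be a maximizer of $\tilde R^{(\pi)}$ over $\pi\in\tilde\Pi_{\mathrm{DP},(1-\sigma)\epsilon}$ (both assumed to exist). Then $\tilde\pi^*\in\Pi_{\mathrm{DP},\epsilon}$ and $R^{(\pi^* )}-R^{(\tilde\pi^* )}\le\sigma^2\epsilon/2$.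
   Context: A finite MDP is $M=(S,A,D,P,R,\gamma)$ where $S,A$ are finite nonempty sets, $D$ is a probability distribution on $S$, $P_{s,a,s'}\ge 0$ with $\sum_{s'}P_{s,a,s'}=1$ for all $s,a$, $R\in\mathbb{R}^{S\times A}$, and $\gamma\in(0,1)$. A policy is $\pi\in\mathbb{R}^{S\times A}$ with $\pi_{s,a}\ge0$ and $\sum_a\pi_{s,a}=1$. Let $P^{(\pi)}_{s,s'}=\sum_a\pi_{s,a}P_{s,a,s'}$. For a distribution $\mu$ on $S$ set $\mu^{(\pi,0)}=\mu$, $\mu^{(\pi,t)}_{s'}=\sum_s\mu^{(\pi,t-1)}_sP^{(\pi)}_{s,s'}$, and $\mu^{(\pi)}=(1-\gamma)\sum_{t\ge0}\gamma^t\mu^{(\pi,t)}$. Write $D^{(\pi,t)},D^{(\pi)}$ for $\mu=D$, $\Lambda^{(\pi)}_{s,a}=D^{(\pi)}_s\pi_{s,a}$, and $R^{(\pi)}=(1-\gamma)^{-1}\sum_{s,a}\Lambda^{(\pi)}_{s,a}R_{s,a}$. Fairness setup: $S=Z\times\tilde S$ with $Z=\{\mathrm{maj},\mathrm{min}\}$ and $\tilde S$ finite nonempty; agent rewards $\rho\in\mathbb{R}^{S\times A}$. For $z\in Z$, $p_z=\sum_{\tilde s}D_{(z,\tilde s)}$, $D_z$ is the distribution $(D_z)_s=D_s\cdot\mathbb{I}[s=(z,\tilde s)\text{ for some }\tilde s]/p_z$, $D_z^{(\pi,t)},D_z^{(\pi)}$ are $\mu^{(\pi,t)},\mu^{(\pi)}$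 for $\mu=D_z$, $(\Lambda_z^{(\pi)})_{s,a}=(D_z^{(\pi)})_s\pi_{s,a}$, and $\rho_z^{(\pi)}=\sum_{s,a}(\Lambda_z^{(\pi)})_{s,a}\rho_{s,a}$. For $\eta\ge0$, $\Pi_{\mathrm{DP},\eta}$ is the set of policies with $|\rho_{\mathrm{maj}}^{(\pi)}-\rho_{\mathrm{min}}^{(\pi)}|\le\eta$. Truncated quantities: $\tilde R^{(\pi)}=\sum_{t=0}^{T-1}\gamma^t\sum_{s,a}D^{(\pi,t)}_s\pi_{s,a}R_{s,a}$, $\tilde\rho_z^{(\pi)}=(1-\gamma)\sum_{t=0}^{T-1}\gamma^t\sum_{s,a}(D_z^{(\pi,t)})_s\pi_{s,a}\rho_{s,a}$, and $\tilde\Pi_{\mathrm{DP},\eta}$ is the set of policies with $|\tilde\rho_{\mathrm{maj}}^{(\pi)}-\tilde\rho_{\mathrm{min}}^{(\pi)}|\le\eta$. *)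

theory Defs
  imports "HOL-Analysis.Analysis"
begin

text \<open>States and actions are finite types; in the fairness setup the
state type is grp \<times> 's, i.e. S = Z \<times> S~ with Z = {maj, min}.\<close>

datatype grp = Maj | Min

instance grp :: finite
proof
  have "(UNIV :: grp set) = {Maj, Min}" using grp.exhaust by auto
  then show "finite (UNIV :: grp set)" by (metis finite.emptyI finite_insert)
qed

definition is_dist :: "('s::finite \<Rightarrow> real) \<Rightarrow> bool" where
  "is_dist \<mu> \<longleftrightarrow> (\<forall>s. \<mu> s \<ge> 0) \<and> (\<Sum>s\<in>UNIV. \<mu> s) = 1"

definition is_mdp ::
  "('s::finite \<Rightarrow> real) \<Rightarrow> ('s \<Rightarrow> 'a::finite \<Rightarrow> 's \<Rightarrow> real) \<Rightarrow> real \<Rightarrow> bool" where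
  "is_mdp D P g \<longleftrightarrow> is_dist D \<and> (\<forall>s a. is_dist (P s a)) \<and> 0 < g \<and> g < 1"

definition is_policy :: "('s::finite \<Rightarrow> 'a::finite \<Rightarrow> real) \<Rightarrow> bool" where
  "is_policy \<pi> \<longleftrightarrow> (\<forall>s a. \<pi> s a \<ge> 0) \<and> (\<forall>s. (\<Sum>a\<in>UNIV. \<pi> s a) = 1)"

definition Ppol :: "('s::finite \<Rightarrow> 'a::finite \<Rightarrow> 's \<Rightarrow> real) \<Rightarrow> ('s \<Rightarrow> 'a \<Rightarrow> real) \<Rightarrow> 's \<Rightarrow> 's \<Rightarrow> real" where
  "Ppol P \<pi> s s' = (\<Sum>a\<in>UNIV. \<pi> s a * P s a s')"

fun state_dist :: "('s::finite \<Rightarrow> 'a::finite \<Rightarrow> 's \<Rightarrow> real) \<Rightarrow> ('s \<Rightarrow> 'a \<Rightarrow> real) \<Rightarrow> ('s \<Rightarrow> real) \<Rightarrow> nat \<Rightarrow> 's \<Rightarrow> real" where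
  "state_dist P \<pi> \<mu> 0 = \<mu>"
| "state_dist P \<pi> \<mu> (Suc t) = (\<lambda>s'. \<Sum>s\<in>UNIV. state_dist P \<pi> \<mu> t s * Ppol P \<pi> s s')"

definition occ :: "('s::finite \<Rightarrow> 'a::finite \<Rightarrow> 's \<Rightarrow> real) \<Rightarrow> real \<Rightarrow> ('s \<Rightarrow> 'a \<Rightarrow> real) \<Rightarrow> ('s \<Rightarrow> real) \<Rightarrow> 's \<Rightarrow> real" where
  "occ P g \<pi> \<mu> s = (1 - g) * (\<Sum>t. g ^ t * state_dist P \<pi> \<mu> t s)"

definition ret :: "('s::finite \<Rightarrow> real) \<Rightarrow> ('s \<Rightarrow> 'a::finite \<Rightarrow> 's \<Rightarrow> real) \<Rightarrow> ('s \<Rightarrow> 'a \<Rightarrow> real) \<Rightarrow> real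
                   \<Rightarrow> ('s \<Rightarrow> 'a \<Rightarrow> real) \<Rightarrow> real" where
  "ret D P R g \<pi> = inverse (1 - g) * (\<Sum>s\<in>UNIV. \<Sum>a\<in>UNIV. occ P g \<pi> D s * \<pi> s a * R s a)"

definition tret :: "nat \<Rightarrow> ('s::finite \<Rightarrow> real) \<Rightarrow> ('s \<Rightarrow> 'a::finite \<Rightarrow> 's \<Rightarrow> real) \<Rightarrow> ('s \<Rightarrow> 'a \<Rightarrow> real) \<Rightarrow> real
                   \<Rightarrow> ('s \<Rightarrow> 'a \<Rightarrow> real) \<Rightarrow> real" where
  "tret T D P R g \<pi> = (\<Sum>t<T. g ^ t * (\<Sum>s\<in>UNIV. \<Sum>a\<in>UNIV. state_dist P \<pi> D t s * \<pi> s a * R s a))"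

definition grp_prob :: "(grp \<times> 's::finite \<Rightarrow> real) \<Rightarrow> grp \<Rightarrow> real" where
  "grp_prob D z = (\<Sum>s\<in>UNIV. D (z, s))"

definition grp_dist :: "(grp \<times> 's::finite \<Rightarrow> real) \<Rightarrow> grp \<Rightarrow> grp \<times> 's \<Rightarrow> real" where
  "grp_dist D z s = (if fst s = z then D s / grp_prob D z else 0)"

definition grp_rew :: "(grp \<times> 's::finite \<Rightarrow> real) \<Rightarrow> (grp \<times> 's \<Rightarrow> 'a::finite \<Rightarrow> grp \<times> 's \<Rightarrow> real)
     \<Rightarrow> (grp \<times> 's \<Rightarrow> 'a \<Rightarrow> real) \<Rightarrow> real \<Rightarrow> (grp \<times> 's \<Rightarrow> 'a \<Rightarrow> real) \<Rightarrow> grp \<Rightarrow> real" where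
  "grp_rew D P \<rho> g \<pi> z =
     (\<Sum>s\<in>UNIV. \<Sum>a\<in>UNIV. occ P g \<pi> (grp_dist D z) s * \<pi> s a * \<rho> s a)"

definition tgrp_rew :: "nat \<Rightarrow> (grp \<times> 's::finite \<Rightarrow> real) \<Rightarrow> (grp \<times> 's \<Rightarrow> 'a::finite \<Rightarrow> grp \<times> 's \<Rightarrow> real)
     \<Rightarrow> (grp \<times> 's \<Rightarrow> 'a \<Rightarrow> real) \<Rightarrow> real \<Rightarrow> (grp \<times> 's \<Rightarrow> 'a \<Rightarrow> real) \<Rightarrow> grp \<Rightarrow> real" where
  "tgrp_rew T D P \<rho> g \<pi> z = (1 - g) *
     (\<Sum>t<T. g ^ t * (\<Sum>s\<in>UNIV. \<Sum>a\<in>UNIV. state_dist P \<pi> (grp_dist D z) t s * \<pi> s a * \<rho> s a))"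

definition Pi_DP :: "(grp \<times> 's::finite \<Rightarrow> real) \<Rightarrow> (grp \<times> 's \<Rightarrow> 'a::finite \<Rightarrow> grp \<times> 's \<Rightarrow> real)
     \<Rightarrow> (grp \<times> 's \<Rightarrow> 'a \<Rightarrow> real) \<Rightarrow> real \<Rightarrow> real \<Rightarrow> (grp \<times> 's \<Rightarrow> 'a \<Rightarrow> real) set" where
  "Pi_DP D P \<rho> g \<eta> = {\<pi>. is_policy \<pi> \<and> \<bar>grp_rew D P \<rho> g \<pi> Maj - grp_rew D P \<rho> g \<pi> Min\<bar> \<le> \<eta>}"

definition tPi_DP :: "nat \<Rightarrow> (grp \<times> 's::finite \<Rightarrow> real) \<Rightarrow> (grp \<times> 's \<Rightarrow> 'a::finite \<Rightarrow> grp \<times> 's \<Rightarrow> real)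
     \<Rightarrow> (grp \<times> 's \<Rightarrow> 'a \<Rightarrow> real) \<Rightarrow> real \<Rightarrow> real \<Rightarrow> (grp \<times> 's \<Rightarrow> 'a \<Rightarrow> real) set" where
  "tPi_DP T D P \<rho> g \<eta> = {\<pi>. is_policy \<pi> \<and> \<bar>tgrp_rew T D P \<rho> g \<pi> Maj - tgrp_rew T D P \<rho> g \<pi> Min\<bar> \<le> \<eta>}"

end

theory Submission
  imports Defs
begin

(* Cutting the horizon at T changes each discounted quantity by at most its geometric tail:
   the return by g^T Rmax / (1 - g), and each group reward, which carries the normalisation
   (1 - g), by g^T Rmax.  The demographic-parity gap therefore moves by at most
   2 g^T Rmax <= sigma^2 eps / 2, which is exactly the slack between the tolerances
   (1 - sigma)^2 eps < (1 - sigma) eps < eps.  So pi* is feasible for the truncated problem,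
   giving tret pi* <= tret pi~*, and pi~* is feasible for tolerance eps; comparing the returns
   through their truncations costs two tails, at most sigma^2 eps / 2. *)

lemma state_dist_nonneg:
  assumes "\<And>s. 0 \<le> \<mu> s" "\<And>s a. 0 \<le> \<pi> s a" "\<And>s a s'. 0 \<le> P s a s'"
  shows "0 \<le> state_dist P \<pi> \<mu> t s"
proof (induction t arbitrary: s)
  case 0
  then show ?case using assms(1) by simp
next
  case (Suc t)
  have "\<And>s'. 0 \<le> Ppol P \<pi> s' s"
    unfolding Ppol_def using assms(2,3) by (simp add: sum_nonneg)
  then show ?case using Suc.IH by (simp add: sum_nonneg)
qed

lemma sum_Ppol:
  assumes "is_policy \<pi>" "\<forall>s a. is_dist (P s a)"
  shows "(\<Sum>s'\<in>UNIV. Ppol P \<pi> s s') = 1"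
proof -
  have "(\<Sum>s'\<in>UNIV. Ppol P \<pi> s s') = (\<Sum>a\<in>UNIV. \<pi> s a * (\<Sum>s'\<in>UNIV. P s a s'))"
    unfolding Ppol_def by (subst sum.swap) (simp add: sum_distrib_left)
  also have "\<dots> = 1" using assms by (simp add: is_dist_def is_policy_def)
  finally show ?thesis .
qed

lemma sum_state_dist:
  assumes "is_policy \<pi>" "\<forall>s a. is_dist (P s a)"
  shows "(\<Sum>s\<in>UNIV. state_dist P \<pi> \<mu> t s) = (\<Sum>s\<in>UNIV. \<mu> s)"
proof (induction t)
  case 0
  then show ?case by simp
next
  case (Suc t)
  have "(\<Sum>s'\<in>UNIV. state_dist P \<pi> \<mu> (Suc t) s')
      = (\<Sum>s\<in>UNIV. state_dist P \<pi> \<mu> t s * (\<Sum>s'\<in>UNIV. Ppol P \<pi> s s'))"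
    unfolding state_dist.simps by (subst sum.swap) (simp add: sum_distrib_left)
  also have "\<dots> = (\<Sum>s\<in>UNIV. state_dist P \<pi> \<mu> t s)"
    using sum_Ppol[OF assms] by simp
  finally show ?case using Suc.IH by simp
qed

lemma state_dist_is_dist:
  assumes "is_dist \<mu>" "is_policy \<pi>" "\<forall>s a. is_dist (P s a)"
  shows "is_dist (state_dist P \<pi> \<mu> t)"
  using assms sum_state_dist[OF assms(2,3)]
  by (auto simp: is_dist_def is_policy_def intro: state_dist_nonneg)

lemma is_dist_le_one:
  assumes "is_dist \<mu>"
  shows "\<mu> s \<le> 1"
proof -
  have "\<mu> s \<le> (\<Sum>s\<in>UNIV. \<mu> s)"
    using assms by (intro member_le_sum) (auto simp: is_dist_def)
  then show ?thesis using assms by (simp add: is_dist_def)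
qed

lemma grp_dist_is_dist:
  assumes "is_dist D" "grp_prob D z > 0"
  shows "is_dist (grp_dist D z)"
proof -
  have "(\<Sum>x\<in>UNIV. grp_dist D z x) = (\<Sum>z'\<in>UNIV. \<Sum>s\<in>UNIV. grp_dist D z (z', s))"
    by (simp add: sum.cartesian_product flip: UNIV_Times_UNIV)
  also have "\<dots> = (\<Sum>z'\<in>UNIV. if z' = z then (\<Sum>s\<in>UNIV. D (z', s)) / grp_prob D z else 0)"
    by (intro sum.cong) (auto simp: grp_dist_def sum_divide_distrib)
  also have "\<dots> = (\<Sum>s\<in>UNIV. D (z, s)) / grp_prob D z"
    by simp
  also have "\<dots> = 1" using assms(2) by (simp add: grp_prob_def)
  finally show ?thesis using assms by (auto simp: is_dist_def grp_dist_def)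
qed

definition step_reward ::
  "('s::finite \<Rightarrow> 'a::finite \<Rightarrow> 's \<Rightarrow> real) \<Rightarrow> ('s \<Rightarrow> 'a \<Rightarrow> real) \<Rightarrow> ('s \<Rightarrow> real)
    \<Rightarrow> ('s \<Rightarrow> 'a \<Rightarrow> real) \<Rightarrow> nat \<Rightarrow> real" where
  "step_reward P \<pi> \<mu> f t = (\<Sum>s\<in>UNIV. \<Sum>a\<in>UNIV. state_dist P \<pi> \<mu> t s * \<pi> s a * f s a)"

lemma abs_step_reward_le:
  assumes "is_dist \<mu>" "is_policy \<pi>" "\<forall>s a. is_dist (P s a)" "\<forall>s a. \<bar>f s a\<bar> \<le> B"
  shows "\<bar>step_reward P \<pi> \<mu> f t\<bar> \<le> B"
proof -
  let ?d = "state_dist P \<pi> \<mu> t"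
  have d: "is_dist ?d" by (rule state_dist_is_dist[OF assms(1-3)])
  have "\<bar>step_reward P \<pi> \<mu> f t\<bar> \<le> (\<Sum>s\<in>UNIV. \<Sum>a\<in>UNIV. \<bar>?d s * \<pi> s a * f s a\<bar>)"
    unfolding step_reward_def by (rule order_trans[OF sum_abs]) (intro sum_mono sum_abs)
  also have "\<dots> \<le> (\<Sum>s\<in>UNIV. \<Sum>a\<in>UNIV. ?d s * \<pi> s a * B)"
    using d assms(2,4) by (intro sum_mono)
      (simp add: abs_mult is_dist_def is_policy_def mult_left_mono)
  also have "\<dots> = B"
    using d assms(2)
    by (simp add: is_dist_def is_policy_def flip: sum_distrib_left sum_distrib_right mult.assoc)
  finally show ?thesis .
qed

lemma summable_discounted:
  fixes x :: "nat \<Rightarrow> real"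
  assumes "\<And>t. \<bar>x t\<bar> \<le> B" "0 \<le> g" "g < 1"
  shows "summable (\<lambda>t. g ^ t * x t)"
proof (rule summable_comparison_test')
  show "summable (\<lambda>t. g ^ t * B)"
    using assms(2,3) by (intro summable_mult2 summable_geometric) simp
  show "norm (g ^ t * x t) \<le> g ^ t * B" for t
    using assms by (simp add: abs_mult mult_left_mono)
qed

lemma discounted_tail_le:
  fixes x :: "nat \<Rightarrow> real"
  assumes "\<And>t. \<bar>x t\<bar> \<le> B" "0 \<le> g" "g < 1"
  shows "\<bar>(\<Sum>t. g ^ t * x t) - (\<Sum>t<T. g ^ t * x t)\<bar> \<le> g ^ T * B / (1 - g)"
proof -
  have "(\<Sum>t. g ^ t * x t) - (\<Sum>t<T. g ^ t * x t) = (\<Sum>n. g ^ (n + T) * x (n + T))"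
  proof -
    have "summable (\<lambda>t. g ^ t * x t)" using assms by (rule summable_discounted)
    then show ?thesis by (simp add: suminf_split_initial_segment[of _ T])
  qed
  also have "\<bar>\<dots>\<bar> \<le> (\<Sum>n. g ^ T * B * g ^ n)"
  proof (rule norm_suminf_le[where 'a=real, unfolded real_norm_def])
    show "summable (\<lambda>n. g ^ T * B * g ^ n)" using assms(2,3) by simp
    show "\<bar>g ^ (n + T) * x (n + T)\<bar> \<le> g ^ T * B * g ^ n" for n
      using mult_right_mono[OF assms(1) zero_le_power[OF assms(2)], of "n + T" "n + T"] assms(2)
      by (simp add: abs_mult power_add mult_ac)
  qed
  also have "\<dots> = g ^ T * B / (1 - g)"
    using assms(2,3) by (simp add: suminf_mult suminf_geometric)
  finally show ?thesis .
qed

lemma occ_weighted_sum_eq_discounted: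
  assumes "is_dist \<mu>" "is_policy \<pi>" "\<forall>s a. is_dist (P s a)" "0 \<le> g" "g < 1"
  shows "(\<Sum>s\<in>UNIV. \<Sum>a\<in>UNIV. occ P g \<pi> \<mu> s * \<pi> s a * f s a)
      = (1 - g) * (\<Sum>t. g ^ t * step_reward P \<pi> \<mu> f t)"
proof -
  have "\<bar>state_dist P \<pi> \<mu> t s\<bar> \<le> 1" for t s
    using state_dist_is_dist[OF assms(1-3), of t] is_dist_le_one[of "state_dist P \<pi> \<mu> t" s]
    by (simp add: is_dist_def)
  then have sm: "summable (\<lambda>t. g ^ t * state_dist P \<pi> \<mu> t s)" for s
    using assms(4,5) by (rule summable_discounted)
  have sm': "summable (\<lambda>t. g ^ t * state_dist P \<pi> \<mu> t s * c)" for s c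
    using summable_mult2[OF sm] .
  have "(\<Sum>t. g ^ t * step_reward P \<pi> \<mu> f t)
      = (\<Sum>t. \<Sum>s\<in>UNIV. \<Sum>a\<in>UNIV. g ^ t * state_dist P \<pi> \<mu> t s * (\<pi> s a * f s a))"
    by (simp add: step_reward_def sum_distrib_left mult.assoc)
  also have "\<dots> = (\<Sum>s\<in>UNIV. \<Sum>a\<in>UNIV. \<Sum>t. g ^ t * state_dist P \<pi> \<mu> t s * (\<pi> s a * f s a))"
    using sm' by (simp add: suminf_sum summable_sum)
  also have "\<dots> = (\<Sum>s\<in>UNIV. \<Sum>a\<in>UNIV. (\<Sum>t. g ^ t * state_dist P \<pi> \<mu> t s) * (\<pi> s a * f s a))"
    by (simp add: suminf_mult2[OF sm])
  finally have series: "(\<Sum>t. g ^ t * step_reward P \<pi> \<mu> f t)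
      = (\<Sum>s\<in>UNIV. \<Sum>a\<in>UNIV. (\<Sum>t. g ^ t * state_dist P \<pi> \<mu> t s) * (\<pi> s a * f s a))" .
  show ?thesis
    unfolding series occ_def by (simp add: sum_distrib_left mult.assoc)
qed

lemma ret_eq_discounted:
  assumes "is_dist D" "is_policy \<pi>" "\<forall>s a. is_dist (P s a)" "0 \<le> g" "g < 1"
  shows "ret D P R g \<pi> = (\<Sum>t. g ^ t * step_reward P \<pi> D R t)"
  using assms(5) by (simp add: ret_def occ_weighted_sum_eq_discounted[OF assms])

lemma grp_rew_eq_discounted:
  assumes "is_dist (grp_dist D z)" "is_policy \<pi>" "\<forall>s a. is_dist (P s a)" "0 \<le> g" "g < 1"
  shows "grp_rew D P \<rho> g \<pi> z = (1 - g) * (\<Sum>t. g ^ t * step_reward P \<pi> (grp_dist D z) \<rho> t)"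
  by (simp add: grp_rew_def occ_weighted_sum_eq_discounted[OF assms])

lemma tret_eq_partial_sum:
  "tret T D P R g \<pi> = (\<Sum>t<T. g ^ t * step_reward P \<pi> D R t)"
  by (simp add: tret_def step_reward_def)

lemma tgrp_rew_eq_partial_sum:
  "tgrp_rew T D P \<rho> g \<pi> z = (1 - g) * (\<Sum>t<T. g ^ t * step_reward P \<pi> (grp_dist D z) \<rho> t)"
  by (simp add: tgrp_rew_def step_reward_def)

lemma abs_ret_minus_tret_le:
  assumes "is_dist D" "is_policy \<pi>" "\<forall>s a. is_dist (P s a)" "0 \<le> g" "g < 1"
    and "\<forall>s a. \<bar>R s a\<bar> \<le> B"
  shows "\<bar>ret D P R g \<pi> - tret T D P R g \<pi>\<bar> \<le> g ^ T * B / (1 - g)"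
  unfolding ret_eq_discounted[OF assms(1-5)] tret_eq_partial_sum
  by (intro discounted_tail_le abs_step_reward_le assms)

lemma abs_grp_rew_minus_tgrp_rew_le:
  assumes "is_dist (grp_dist D z)" "is_policy \<pi>" "\<forall>s a. is_dist (P s a)" "0 \<le> g" "g < 1"
    and "\<forall>s a. \<bar>\<rho> s a\<bar> \<le> B"
  shows "\<bar>grp_rew D P \<rho> g \<pi> z - tgrp_rew T D P \<rho> g \<pi> z\<bar> \<le> g ^ T * B"
proof -
  let ?x = "step_reward P \<pi> (grp_dist D z) \<rho>"
  have "\<bar>grp_rew D P \<rho> g \<pi> z - tgrp_rew T D P \<rho> g \<pi> z\<bar>
      = (1 - g) * \<bar>(\<Sum>t. g ^ t * ?x t) - (\<Sum>t<T. g ^ t * ?x t)\<bar>"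
    using assms(5)
    by (simp add: grp_rew_eq_discounted[OF assms(1-5)] tgrp_rew_eq_partial_sum
        abs_mult flip: right_diff_distrib)
  also have "\<dots> \<le> (1 - g) * (g ^ T * B / (1 - g))"
    using assms(5) by (intro mult_left_mono discounted_tail_le abs_step_reward_le assms) auto
  also have "\<dots> = g ^ T * B"
    using assms(5) by simp
  finally show ?thesis .
qed

lemma DP_gap_truncation_error:
  assumes "is_mdp D P g" "grp_prob D Maj > 0" "grp_prob D Min > 0" "is_policy \<pi>"
    and "\<forall>s a. \<bar>\<rho> s a\<bar> \<le> B"
  shows "\<bar>(grp_rew D P \<rho> g \<pi> Maj - grp_rew D P \<rho> g \<pi> Min)
          - (tgrp_rew T D P \<rho> g \<pi> Maj - tgrp_rew T D P \<rho> g \<pi> Min)\<bar> \<le> 2 * g ^ T * B"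
proof -
  have mdp: "is_dist D" "\<forall>s a. is_dist (P s a)" "0 \<le> g" "g < 1"
    using assms(1) by (auto simp: is_mdp_def)
  have "\<bar>grp_rew D P \<rho> g \<pi> z - tgrp_rew T D P \<rho> g \<pi> z\<bar> \<le> g ^ T * B"
    if "grp_prob D z > 0" for z
    using grp_dist_is_dist[OF mdp(1) that] assms(4) mdp(2-4) assms(5)
    by (rule abs_grp_rew_minus_tgrp_rew_le)
  from this[OF assms(2)] this[OF assms(3)] show ?thesis
    by linarith
qed

lemma tPi_DP_subset_Pi_DP:
  assumes "is_mdp D P g" "grp_prob D Maj > 0" "grp_prob D Min > 0"
    and "\<forall>s a. \<bar>\<rho> s a\<bar> \<le> B" "\<eta> + 2 * g ^ T * B \<le> \<eta>'"
  shows "tPi_DP T D P \<rho> g \<eta> \<subseteq> Pi_DP D P \<rho> g \<eta>'"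
  using DP_gap_truncation_error[OF assms(1-3) _ assms(4), of _ T] assms(5)
  by (fastforce simp: tPi_DP_def Pi_DP_def)

lemma Pi_DP_subset_tPi_DP:
  assumes "is_mdp D P g" "grp_prob D Maj > 0" "grp_prob D Min > 0"
    and "\<forall>s a. \<bar>\<rho> s a\<bar> \<le> B" "\<eta> + 2 * g ^ T * B \<le> \<eta>'"
  shows "Pi_DP D P \<rho> g \<eta> \<subseteq> tPi_DP T D P \<rho> g \<eta>'"
  using DP_gap_truncation_error[OF assms(1-3) _ assms(4), of _ T] assms(5)
  by (fastforce simp: tPi_DP_def Pi_DP_def)

lemma ret_diff_le_of_tret_le:
  assumes "is_mdp D P g" "is_policy \<pi>\<^sub>1" "is_policy \<pi>\<^sub>2" "\<forall>s a. \<bar>R s a\<bar> \<le> B"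
    and "tret T D P R g \<pi>\<^sub>1 \<le> tret T D P R g \<pi>\<^sub>2"
  shows "ret D P R g \<pi>\<^sub>1 - ret D P R g \<pi>\<^sub>2 \<le> 2 * (g ^ T * B / (1 - g))"
proof -
  have mdp: "is_dist D" "\<forall>s a. is_dist (P s a)" "0 \<le> g" "g < 1"
    using assms(1) by (auto simp: is_mdp_def)
  show ?thesis
    using abs_ret_minus_tret_le[OF mdp(1) assms(2) mdp(2-4) assms(4), of T]
      abs_ret_minus_tret_le[OF mdp(1) assms(3) mdp(2-4) assms(4), of T] assms(5)
    by linarith
qed

lemma DP_tolerance_slack:
  fixes \<sigma> \<epsilon> :: real
  assumes "0 \<le> \<sigma>" "\<sigma> \<le> 1/2" "0 \<le> \<epsilon>"
  shows "(1 - \<sigma>)\<^sup>2 * \<epsilon> + \<sigma>\<^sup>2 * \<epsilon> / 2 \<le> (1 - \<sigma>) * \<epsilon>"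
    and "(1 - \<sigma>) * \<epsilon> + \<sigma>\<^sup>2 * \<epsilon> / 2 \<le> \<epsilon>"
proof -
  have "0 \<le> \<epsilon> * \<sigma> * (2 - 3 * \<sigma>)" "0 \<le> \<epsilon> * \<sigma> * (2 - \<sigma>)"
    using assms by simp_all
  then show "(1 - \<sigma>)\<^sup>2 * \<epsilon> + \<sigma>\<^sup>2 * \<epsilon> / 2 \<le> (1 - \<sigma>) * \<epsilon>"
    and "(1 - \<sigma>) * \<epsilon> + \<sigma>\<^sup>2 * \<epsilon> / 2 \<le> \<epsilon>"
    by (simp_all add: power2_eq_square algebra_simps)
qed

theorem theorem5:
  fixes D :: "grp \<times> 's::finite \<Rightarrow> real"
    and P :: "grp \<times> 's \<Rightarrow> 'a::finite \<Rightarrow> grp \<times> 's \<Rightarrow> real"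
    and R \<rho> :: "grp \<times> 's \<Rightarrow> 'a \<Rightarrow> real"
    and g Rmax \<epsilon> \<sigma> :: real and T :: nat
    and \<pi>s \<pi>t :: "grp \<times> 's \<Rightarrow> 'a \<Rightarrow> real"
  assumes mdp: "is_mdp D P g"
    and pmaj: "grp_prob D Maj > 0" and pmin: "grp_prob D Min > 0"
    and Rmax: "Rmax > 0" "\<forall>s a. \<bar>R s a\<bar> \<le> Rmax" "\<forall>s a. \<bar>\<rho> s a\<bar> \<le> Rmax"
    and eps: "\<epsilon> > 0"
    and sigma: "0 < \<sigma>" "\<sigma> \<le> 1/2"
    and T: "T > 0" "g ^ T * Rmax / (1 - g) \<le> \<sigma>\<^sup>2 * \<epsilon> / 4"
    and opt: "\<pi>s \<in> Pi_DP D P \<rho> g ((1 - \<sigma>)\<^sup>2 * \<epsilon>)"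
             "\<forall>\<pi>\<in>Pi_DP D P \<rho> g ((1 - \<sigma>)\<^sup>2 * \<epsilon>). ret D P R g \<pi> \<le> ret D P R g \<pi>s"
    and topt: "\<pi>t \<in> tPi_DP T D P \<rho> g ((1 - \<sigma>) * \<epsilon>)"
             "\<forall>\<pi>\<in>tPi_DP T D P \<rho> g ((1 - \<sigma>) * \<epsilon>). tret T D P R g \<pi> \<le> tret T D P R g \<pi>t"
  shows "\<pi>t \<in> Pi_DP D P \<rho> g \<epsilon> \<and> ret D P R g \<pi>s - ret D P R g \<pi>t \<le> \<sigma>\<^sup>2 * \<epsilon> / 2"
proof -
  have "g ^ T * Rmax \<le> g ^ T * Rmax / (1 - g)"
    using mdp Rmax(1) by (simp add: is_mdp_def le_divide_eq mult_left_le)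
  then have margin: "2 * g ^ T * Rmax \<le> \<sigma>\<^sup>2 * \<epsilon> / 2"
    using T(2) by linarith
  note slack = DP_tolerance_slack[of \<sigma> \<epsilon>]
  have "Pi_DP D P \<rho> g ((1 - \<sigma>)\<^sup>2 * \<epsilon>) \<subseteq> tPi_DP T D P \<rho> g ((1 - \<sigma>) * \<epsilon>)"
    using slack(1) margin sigma eps by (intro Pi_DP_subset_tPi_DP[OF mdp pmaj pmin Rmax(3)]) auto
  then have "tret T D P R g \<pi>s \<le> tret T D P R g \<pi>t"
    using opt(1) topt(2) by blast
  moreover have "is_policy \<pi>s" "is_policy \<pi>t"
    using opt(1) topt(1) by (auto simp: Pi_DP_def tPi_DP_def)
  ultimately have "ret D P R g \<pi>s - ret D P R g \<pi>t \<le> 2 * (g ^ T * Rmax / (1 - g))"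
    by (intro ret_diff_le_of_tret_le[OF mdp _ _ Rmax(2)])
  then have "ret D P R g \<pi>s - ret D P R g \<pi>t \<le> \<sigma>\<^sup>2 * \<epsilon> / 2"
    using T(2) by linarith
  moreover have "tPi_DP T D P \<rho> g ((1 - \<sigma>) * \<epsilon>) \<subseteq> Pi_DP D P \<rho> g \<epsilon>"
    using slack(2) margin sigma eps by (intro tPi_DP_subset_Pi_DP[OF mdp pmaj pmin Rmax(3)]) auto
  ultimately show ?thesis
    using topt(1) by blast
qed

end
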